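(* Let $\mathbf{A}\in\mathbb{R}^{n\times n}$ be symmetric positive semidefinite with $\mathbf{1}^{\intercal}\mathbf{A}=\mathbf{0}^{\intercal}$, and let $\mathbf{x}\in\{-1,1\}^n$. Set $M=\frac14\mathbf{x}^{\intercal}\mathbf{A}\mathbf{x}$ and $S=\{i\in\{1,\dots,n\}:\mathbf{x}_i=1\}$, and assume $S\neq\emptyset$. Then there exists $i\in S$ such that, letting $\mathbf{x}'$ be $\mathbf{x}$ with its $i$-th entry changed to $-1$, we have $M-\frac14\mathbf{x}'^{\intercal}\mathbf{A}\mathbf{x}'\le\frac{2M}{|S|}$.
   Context: $\mathbf{1}$ is the all-ones vector and $\mathbf{0}$ the all-zeros vector. *)

theory Defs
  imports "HOL-Analysis.Analysis"
begin

end

theory Submission imports Defs begin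

text \<open>Flipping a coordinate \<open>x\<^sub>i = 1\<close> to \<open>-1\<close> lowers \<open>x\<^sup>T A x / 4\<close> by
  \<open>(A x)\<^sub>i - A\<^sub>i\<^sub>i \<le> (A x)\<^sub>i\<close>, as the diagonal of a positive semidefinite matrix is
  nonnegative. Summed over \<open>S\<close>, the \<open>(A x)\<^sub>i\<close> give \<open>(x + \<one>)\<^sup>T A x / 2 = x\<^sup>T A x / 2 = 2M\<close>,
  because \<open>\<one>\<^sup>T A = \<zero>\<^sup>T\<close>. So the average decrease over \<open>S\<close>, hence the smallest one,
  is at most \<open>2M/|S|\<close>.\<close>

lemma exists_le_average:
  fixes f :: "'a \<Rightarrow> real"
  assumes "finite S" and "S \<noteq> {}" and "sum f S \<le> B"
  shows "\<exists>i\<in>S. f i \<le> B / real (card S)"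
proof -
  have "Min (f ` S) \<in> f ` S" using assms by simp
  then obtain i where "i \<in> S" and "f i = Min (f ` S)" by auto
  moreover have "real (card S) * Min (f ` S) \<le> B"
    using sum_bounded_below[of S "Min (f ` S)" f] assms by simp
  moreover have "real (card S) > 0" using assms by (simp add: card_gt_0_iff)
  ultimately show ?thesis
    by (intro bexI[of _ i]) (auto simp: pos_le_divide_eq mult.commute)
qed

lemma sum_plus_one_entries:
  fixes x v :: "real ^ 'n"
  assumes "\<forall>i. x $ i = 1 \<or> x $ i = -1"
  shows "(\<Sum>i\<in>{i. x $ i = 1}. v $ i) = (x \<bullet> v + 1 \<bullet> v) / 2"
proof -
  have "x \<bullet> v + 1 \<bullet> v = (\<Sum>i\<in>UNIV. (x $ i + 1) * v $ i)"
    by (simp add: inner_vec_def sum.distrib algebra_simps)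
  also have "\<dots> = (\<Sum>i\<in>UNIV. if x $ i = 1 then 2 * v $ i else 0)"
    using assms by (intro sum.cong) auto
  also have "\<dots> = 2 * (\<Sum>i\<in>{i. x $ i = 1}. v $ i)"
    by (simp add: sum.If_cases sum_distrib_left)
  finally show ?thesis by simp
qed

lemma quadratic_form_add:
  fixes A :: "real ^ 'n ^ 'n" and x y :: "real ^ 'n"
  assumes "transpose A = A"
  shows "(x + y) \<bullet> (A *v (x + y)) = x \<bullet> (A *v x) + 2 * (y \<bullet> (A *v x)) + y \<bullet> (A *v y)"
proof -
  have "x \<bullet> (A *v y) = y \<bullet> (A *v x)"
    by (metis assms dot_lmul_matrix inner_commute vector_transpose_matrix)
  then show ?thesis
    by (simp add: matrix_vector_right_distrib inner_add_left inner_add_right)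
qed

lemma quadratic_form_axis: "axis i 1 \<bullet> ((A :: real ^ 'n ^ 'n) *v axis i 1) = A $ i $ i"
  by (simp add: inner_axis' matrix_vector_mult_basis column_def)

lemma psd_diag_nonneg:
  fixes A :: "real ^ 'n ^ 'n"
  assumes "\<forall>v :: real ^ 'n. 0 \<le> v \<bullet> (A *v v)"
  shows "0 \<le> A $ i $ i"
  using assms quadratic_form_axis by metis

lemma quadratic_form_flip:
  fixes A :: "real ^ 'n ^ 'n" and x :: "real ^ 'n"
  assumes "transpose A = A" and "x $ i = 1"
  shows "x \<bullet> (A *v x)
           - (\<chi> j. if j = i then -1 else x $ j) \<bullet> (A *v (\<chi> j. if j = i then -1 else x $ j))
         = 4 * ((A *v x) $ i - A $ i $ i)"
proof -
  let ?e = "(-2) *\<^sub>R axis i 1 :: real ^ 'n"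
  have "(\<chi> j. if j = i then -1 else x $ j) = x + ?e"
    using assms(2) by (auto simp: vec_eq_iff axis_def)
  moreover have "(x + ?e) \<bullet> (A *v (x + ?e)) = x \<bullet> (A *v x) + 2 * (?e \<bullet> (A *v x)) + ?e \<bullet> (A *v ?e)"
    using quadratic_form_add[OF assms(1)] .
  moreover have "?e \<bullet> (A *v x) = -2 * (A *v x) $ i" and "?e \<bullet> (A *v ?e) = 4 * A $ i $ i"
    by (simp_all only: matrix_vector_mult_scaleR inner_scaleR_left inner_scaleR_right
        inner_axis' quadratic_form_axis vector_scaleR_component)
       (simp_all add: matrix_vector_mult_basis column_def)
  ultimately show ?thesis by simp
qed

theorem lemma3p6:
  fixes A :: "real ^ 'n ^ 'n" and x :: "real ^ 'n"
  assumes sym: "transpose A = A"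
    and psd: "\<forall>v :: real ^ 'n. 0 \<le> v \<bullet> (A *v v)"
    and row0: "(1 :: real ^ 'n) v* A = 0"
    and pm1: "\<forall>i. x $ i = 1 \<or> x $ i = -1"
    and Sne: "{i. x $ i = 1} \<noteq> {}"
  shows "\<exists>i\<in>{i. x $ i = 1}.
           (1/4) * (x \<bullet> (A *v x))
             - (1/4) * ((\<chi> j. if j = i then -1 else x $ j) \<bullet> (A *v (\<chi> j. if j = i then -1 else x $ j)))
           \<le> 2 * ((1/4) * (x \<bullet> (A *v x))) / real (card {i. x $ i = 1})"
proof -
  define S where "S = {i. x $ i = 1}"
  have "1 \<bullet> (A *v x) = 0"
    by (metis dot_lmul_matrix row0 inner_zero_left)
  then have "(\<Sum>i\<in>S. (A *v x) $ i) = 2 * ((1/4) * (x \<bullet> (A *v x)))"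
    unfolding S_def using sum_plus_one_entries[OF pm1] by simp
  moreover have "(\<Sum>i\<in>S. (A *v x) $ i - A $ i $ i) \<le> (\<Sum>i\<in>S. (A *v x) $ i)"
    using psd_diag_nonneg[OF psd] by (intro sum_mono) auto
  ultimately have "(\<Sum>i\<in>S. (A *v x) $ i - A $ i $ i) \<le> 2 * ((1/4) * (x \<bullet> (A *v x)))"
    by simp
  moreover have "finite S" and "S \<noteq> {}"
    using Sne unfolding S_def by simp_all
  ultimately obtain i where "i \<in> S"
    and "(A *v x) $ i - A $ i $ i \<le> 2 * ((1/4) * (x \<bullet> (A *v x))) / real (card S)"
    using exists_le_average by blast
  moreover have "x \<bullet> (A *v x)
      - (\<chi> j. if j = i then -1 else x $ j) \<bullet> (A *v (\<chi> j. if j = i then -1 else x $ j))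
      = 4 * ((A *v x) $ i - A $ i $ i)"
    using quadratic_form_flip[OF sym] \<open>i \<in> S\<close> unfolding S_def by simp
  ultimately have "(1/4) * (x \<bullet> (A *v x))
      - (1/4) * ((\<chi> j. if j = i then -1 else x $ j) \<bullet> (A *v (\<chi> j. if j = i then -1 else x $ j)))
      \<le> 2 * ((1/4) * (x \<bullet> (A *v x))) / real (card S)"
    by argo
  with \<open>i \<in> S\<close> show ?thesis
    unfolding S_def by blast
qed

end
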